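(* Let $a,b$ be integers with $0<b<a$, let $S=\langle a,a+1,\ldots,a+b\rangle$ with conductor $c$, and let $m\ge 2c-1$. Let $M$ be an $(S,m,r)$-amenable set. Then there exists an $(S,m,r)$-amenable set $T$ whose shadow is an interval of integers containing $m$ and such that $\sharp\mathrm D(T)\le\sharp\mathrm D(M)$.
   Context: For $x\in S$, $\mathrm D(x)=\{\alpha\in S\mid x-\alpha\in S\}$ and for $A\subseteq S$, $\mathrm D(A)=\bigcup_{x\in A}\mathrm D(x)$. A set $M=\{m_1<\cdots<m_r\}\subseteq S$ with $2c-1\le m=m_1$ is $(S,m,r)$-amenable if $\mathrm D(m_i)\cap[m,\infty)\subseteq M$ for all $i$. The ground is $\{m,m+1,\ldots,m+a+b-1\}$, and the shadow of $M$ is $M\cap\{m,\ldots,m+a+b-1\}$. *)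

theory Defs
  imports Main
begin

inductive_set gen_monoid :: "nat set \<Rightarrow> nat set" for A :: "nat set" where
  zero: "0 \<in> gen_monoid A"
| add: "x \<in> A \<Longrightarrow> y \<in> gen_monoid A \<Longrightarrow> x + y \<in> gen_monoid A"

definition interval_semigroup :: "nat \<Rightarrow> nat \<Rightarrow> nat set" where
  "interval_semigroup a b = gen_monoid {a..a+b}"

definition conductor :: "nat set \<Rightarrow> nat" where
  "conductor S = (LEAST c. \<forall>n\<ge>c. n \<in> S)"

definition Dset :: "nat set \<Rightarrow> nat \<Rightarrow> nat set" where
  "Dset S x = {\<alpha> \<in> S. \<alpha> \<le> x \<and> x - \<alpha> \<in> S}"

definition DsetA :: "nat set \<Rightarrow> nat set \<Rightarrow> nat set" where
  "DsetA S A = (\<Union>x\<in>A. Dset S x)"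

definition amenable :: "nat set \<Rightarrow> nat \<Rightarrow> nat \<Rightarrow> nat set \<Rightarrow> bool" where
  "amenable S m r M \<longleftrightarrow>
     finite M \<and> card M = r \<and> M \<subseteq> S \<and> m \<in> M \<and> (\<forall>x\<in>M. m \<le> x) \<and>
     int (2 * conductor S) - 1 \<le> int m \<and>
     (\<forall>x\<in>M. Dset S x \<inter> {m..} \<subseteq> M)"

definition shadow :: "nat \<Rightarrow> nat \<Rightarrow> nat \<Rightarrow> nat set \<Rightarrow> nat set" where
  "shadow a b m M = M \<inter> {m..<m+a+b}"

end

theory Submission
  imports Defs
begin

text \<open>
  S consists of the n with t a \<le> n \<le> t (a + b) for some t. Writing M = m + P, amenability of M says
  exactly that P is a finite set containing 0 and closed under subtracting elements of S, and since
  m \<ge> 2c - 1 the set D(M) consists of M together with all elements of S below m except the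
  m - 1 - u with u in Q(P) = {u | p + u + 1 \<notin> S for all p \<in> P}. Hence
  \<sharp>D(M) = \<sharp>M + \<sharp>(S \<inter> [0, m)) - \<sharp>Q(P), and it suffices to replace P by a closed set of the
  same size whose part below a + b is an initial segment, without making Q(P) smaller.

  If P has q < a + b elements below a + b, a wrap-around counting argument shows that P has at
  most q - t b elements in the block [t (a + b), (t + 1)(a + b)), which is exactly what the
  staircase K(q) = {t a + w | t b \<le> w < q} has there; so the first \<sharp>P elements of K(q) are the
  required set P'. Moreover Q(P) is again closed and has at most a - q elements below a + b, whence
  \<sharp>Q(P) \<le> \<sharp>K(a - q), while K(a - q) \<subseteq> Q(P') because sums from K(q) and K(a - q) never reach S.
\<close>

section \<open>The interval semigroup\<close>

lemma gen_monoid_add: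
  assumes "x \<in> gen_monoid A" and "y \<in> gen_monoid A"
  shows "x + y \<in> gen_monoid A"
  using assms by (induction rule: gen_monoid.induct) (auto simp: add.assoc intro: gen_monoid.add)

lemma mem_interval_semigroup_iff:
  "n \<in> interval_semigroup a b \<longleftrightarrow> (\<exists>t. t*a \<le> n \<and> n \<le> t*(a+b))"
proof
  assume "n \<in> interval_semigroup a b"
  then show "\<exists>t. t*a \<le> n \<and> n \<le> t*(a+b)"
    unfolding interval_semigroup_def
  proof (induction rule: gen_monoid.induct)
    case zero
    show ?case by simp
  next
    case (add x y)
    then obtain t where "t*a \<le> y" "y \<le> t*(a+b)" by blast
    with add.hyps(1) show ?case by (intro exI[of _ "Suc t"]) auto
  qed
next
  assume "\<exists>t. t*a \<le> n \<and> n \<le> t*(a+b)"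
  then obtain t where "t*a \<le> n" "n \<le> t*(a+b)" by blast
  then show "n \<in> interval_semigroup a b"
  proof (induction t arbitrary: n)
    case 0
    then show ?case by (simp add: interval_semigroup_def gen_monoid.zero)
  next
    case (Suc t)
    define y where "y = max (t*a) (n - (a+b))"
    have "n - y \<in> {a..a+b}"
      using Suc.prems by (auto simp: y_def)
    moreover have "y \<in> interval_semigroup a b"
      using Suc.prems by (intro Suc.IH) (auto simp: y_def)
    ultimately have "(n - y) + y \<in> interval_semigroup a b"
      unfolding interval_semigroup_def by (rule gen_monoid.add)
    moreover have "n - y + y = n"
      using Suc.prems by (auto simp: y_def)
    ultimately show ?case by simp
  qed
qed

lemma not_mem_interval_semigroup:
  assumes "j*b < u" and "u < a"
  shows "j*a + u \<notin> interval_semigroup a b"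
proof
  assume "j*a + u \<in> interval_semigroup a b"
  then obtain t where t: "t*a \<le> j*a + u" "j*a + u \<le> t*(a+b)"
    unfolding mem_interval_semigroup_iff by blast
  show False
  proof (cases "t \<le> j")
    case True
    then have "t*(a+b) \<le> j*a + j*b"
      using mult_le_mono1[OF True, of "a+b"] by (simp add: add_mult_distrib2)
    then show False using t assms by linarith
  next
    case False
    then have "Suc j * a \<le> t*a" by (intro mult_le_mono1) auto
    then show False using t assms by simp
  qed
qed

section \<open>Counting windows of consecutive integers\<close>

lemma card_add_width_le:
  fixes E Y :: "nat set"
  assumes "finite Y" and "E \<noteq> {}" and "\<And>e. e \<in> E \<Longrightarrow> {e..e+w} \<subseteq> Y"
  shows "card E + w \<le> card Y"
proof -
  have "E \<subseteq> Y" using assms(3) by fastforce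
  then have "finite E" using assms(1) by (rule finite_subset)
  define e0 where "e0 = Min E"
  have e0: "e0 \<in> E" "\<And>e. e \<in> E \<Longrightarrow> e0 \<le> e"
    using \<open>finite E\<close> assms(2) by (simp_all add: e0_def)
  \<comment> \<open>Y contains the right ends e + w and, disjoint from them, the first w points of the lowest window\<close>
  have "card E + w = card ((\<lambda>e. e + w) ` E \<union> {e0..<e0+w})"
    using \<open>finite E\<close> by (subst card_Un_disjoint) (auto simp: card_image dest: e0(2))
  also have "\<dots> \<le> card Y"
  proof (intro card_mono[OF assms(1)] Un_least image_subsetI)
    fix e assume "e \<in> E"
    then show "e + w \<in> Y" using assms(3)[of e] by auto
  next
    show "{e0..<e0+w} \<subseteq> Y" using assms(3)[OF e0(1)] by auto
  qed
  finally show ?thesis .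
qed

lemma add_one_le_card_below_gap:
  fixes D :: "nat set"
  assumes "z \<notin> D" and "\<And>x. x + a \<le> v \<Longrightarrow> x \<le> z \<Longrightarrow> x \<in> D"
  shows "v + 1 \<le> card (D \<inter> {..<z}) + a"
proof (cases "v < a")
  case False
  have "v - a < z"
  proof (rule ccontr)
    assume "\<not> v - a < z"
    then have "z \<in> D" using assms(2)[of z] False by simp
    then show False using assms(1) by simp
  qed
  then have "{..v - a} \<subseteq> D \<inter> {..<z}" using assms(2) False by auto
  then have "card {..v - a} \<le> card (D \<inter> {..<z})" by (intro card_mono) auto
  then show ?thesis using False by simp
qed simp

lemma obtain_max_gap:
  fixes D :: "nat set"
  assumes "D \<subset> {..<n}"
  obtains z where "z < n" "z \<notin> D" "card D = card (D \<inter> {..<z}) + (n - Suc z)"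
proof -
  define z where "z = Max ({..<n} - D)"
  have "{..<n} - D \<noteq> {}" using assms by blast
  then have "z \<in> {..<n} - D" unfolding z_def by (intro Max_in) auto
  then have z: "z < n" "z \<notin> D" by auto
  have "{z<..<n} \<subseteq> D"
  proof
    fix x assume "x \<in> {z<..<n}"
    then show "x \<in> D" using Max_ge[of "{..<n} - D" x] unfolding z_def[symmetric] by auto
  qed
  moreover have "x \<in> (D \<inter> {..<z}) \<union> {z<..<n}" if "x \<in> D" for x
    using that assms z(2) by (cases x z rule: linorder_cases) auto
  ultimately have "D = (D \<inter> {..<z}) \<union> {z<..<n}" by blast
  then have "card D = card ((D \<inter> {..<z}) \<union> {z<..<n})" by (rule arg_cong)
  also have "\<dots> = card (D \<inter> {..<z}) + (n - Suc z)" by (subst card_Un_disjoint) auto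
  finally show ?thesis using that z by blast
qed

lemma card_add_width_le_wrapped:
  fixes D E :: "nat set"
  assumes D: "D \<subset> {..<n}" and "a \<le> n" and E: "E \<subseteq> {..<n}" "E \<noteq> {}"
    and window: "\<And>e x. e \<in> E \<Longrightarrow> e \<le> x \<Longrightarrow> x \<le> e + w \<Longrightarrow> x < n \<Longrightarrow> x \<in> D"
    and wrap: "\<And>e x. e \<in> E \<Longrightarrow> x + a \<le> e + w \<Longrightarrow> x < n \<Longrightarrow> x \<in> D"
  shows "card E + w \<le> card D"
proof -
  obtain z where z: "z < n" "z \<notin> D" and card_D: "card D = card (D \<inter> {..<z}) + (n - Suc z)"
    using obtain_max_gap[OF D] by blast
  define E1 E2 where "E1 = E \<inter> {..<z}" and "E2 = E \<inter> {z<..<n}"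
  have "z \<notin> E" using window[of z z] z by auto
  then have "x \<in> E1 \<union> E2" if "x \<in> E" for x
    using that E(1) unfolding E1_def E2_def by (cases x z rule: linorder_cases) auto
  then have "E = E1 \<union> E2" unfolding E1_def E2_def by blast
  then have "card E = card (E1 \<union> E2)" by (rule arg_cong)
  also have "\<dots> = card E1 + card E2" by (subst card_Un_disjoint) (auto simp: E1_def E2_def)
  finally have card_E: "card E = card E1 + card E2" .
  show ?thesis
  proof (cases "E1 = {}")
    case False
    have "card E1 + w \<le> card (D \<inter> {..<z})"
    proof (rule card_add_width_le[OF _ False])
      fix e assume "e \<in> E1"
      then have e: "e \<in> E" "e < z" by (auto simp: E1_def)
      then have "\<not> z \<le> e + w" using window[of e z] z by auto
      then show "{e..e+w} \<subseteq> D \<inter> {..<z}" using window[of e] e z(1) by auto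
    qed simp
    moreover have "card E2 \<le> card {z<..<n}" unfolding E2_def by (intro card_mono) auto
    ultimately show ?thesis using card_D card_E card_greaterThanLessThan[of z n] by linarith
  next
    case True
    then have "E2 \<noteq> {}" using \<open>E = E1 \<union> E2\<close> E(2) by simp
    define e where "e = Max E2"
    have "e \<in> E2" unfolding e_def using \<open>E2 \<noteq> {}\<close> by (intro Max_in) (auto simp: E2_def)
    then have e: "e \<in> E" "z < e" by (auto simp: E2_def)
    have "E2 \<subseteq> {z<..e}" unfolding e_def E2_def by (auto intro: Max_ge)
    then have "card E2 \<le> e - z" using card_mono[of "{z<..e}" E2] by simp
    moreover have "e + w + 1 \<le> card (D \<inter> {..<z}) + a"
      using add_one_le_card_below_gap[OF z(2), of a "e + w"] wrap[of e] e(1) z(1) by simp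
    moreover have "card E = card E2" using card_E True by simp
    ultimately show ?thesis using card_D e(2) \<open>a \<le> n\<close> by arith
  qed
qed

lemma card_Int_lessThan_mult:
  fixes A :: "nat set"
  shows "card (A \<inter> {..<B*n}) = (\<Sum>t<B. card (A \<inter> {t*n..<Suc t*n}))"
proof (induction B)
  case (Suc B)
  have "A \<inter> {..<Suc B*n} = (A \<inter> {..<B*n}) \<union> (A \<inter> {B*n..<Suc B*n})" by auto
  then have "card (A \<inter> {..<Suc B*n}) = card (A \<inter> {..<B*n}) + card (A \<inter> {B*n..<Suc B*n})"
    by (simp add: card_Un_disjoint disjoint_iff)
  then show ?case using Suc.IH by simp
qed simp

lemma exists_card_Int_lessThan_eq:
  fixes K :: "nat set"
  assumes "finite K" and "r \<le> card K"
  shows "\<exists>y. card (K \<inter> {..<y}) = r"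
proof -
  obtain B where "K \<subseteq> {..<B}" using assms(1) by (auto simp: finite_nat_set_iff_bounded)
  then have "card (K \<inter> {..<B}) = card K" by (simp add: Int_absorb2)
  moreover have "\<bar>int (card (K \<inter> {..<i + 1})) - int (card (K \<inter> {..<i}))\<bar> \<le> 1" for i
    by (cases "i \<in> K") (simp_all add: lessThan_Suc Int_insert_right card_insert_if)
  ultimately show ?thesis
    using nat0_intermed_int_val[of B "\<lambda>i. int (card (K \<inter> {..<i}))" "int r"] assms(2) by auto
qed

section \<open>Amenable sets as shifted closed sets\<close>

definition down_closed :: "nat set \<Rightarrow> nat set \<Rightarrow> bool" where
  "down_closed S P \<longleftrightarrow> (\<forall>p\<in>P. \<forall>s\<in>S. s \<le> p \<longrightarrow> p - s \<in> P)"

text \<open>For M = m + P, u \<in> missing_shifts S P records that m - 1 - u is not in D(M), see DsetA_shift_eq.\<close>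

definition missing_shifts :: "nat set \<Rightarrow> nat set \<Rightarrow> nat set" where
  "missing_shifts S P = {u. \<forall>p\<in>P. p + u + 1 \<notin> S}"

lemma down_closed_Int_lessThan:
  "down_closed S P \<Longrightarrow> down_closed S (P \<inter> {..<y})"
  unfolding down_closed_def by auto

lemma down_closed_missing_shifts:
  assumes "\<And>x y. x \<in> S \<Longrightarrow> y \<in> S \<Longrightarrow> x + y \<in> S"
  shows "down_closed S (missing_shifts S P)"
  unfolding down_closed_def missing_shifts_def
proof (intro ballI impI CollectI notI)
  fix u s p
  assume u: "u \<in> {u. \<forall>p\<in>P. p + u + 1 \<notin> S}" and s: "s \<in> S" "s \<le> u"
    and p: "p \<in> P" and "p + (u - s) + 1 \<in> S"
  then have "p + (u - s) + 1 + s \<in> S" using assms by blast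
  moreover have "p + (u - s) + 1 + s = p + u + 1" using s by simp
  ultimately show False using u p by auto
qed

lemma Suc_less_conductor_if_missing_shift:
  assumes "\<And>n. conductor S \<le> n \<Longrightarrow> n \<in> S" and "0 \<in> P" and "u \<in> missing_shifts S P"
  shows "Suc u < conductor S"
proof -
  have "Suc u \<notin> S" using assms(2,3) unfolding missing_shifts_def by force
  then show ?thesis using assms(1) by (meson not_le)
qed

lemma amenable_shift_iff:
  assumes cond: "\<And>n. conductor S \<le> n \<Longrightarrow> n \<in> S"
    and m: "int (2 * conductor S) - 1 \<le> int m"
  shows "amenable S m r ((+) m ` P) \<longleftrightarrow> finite P \<and> card P = r \<and> 0 \<in> P \<and> down_closed S P"
proof -
  have mem: "n \<in> S" if "m \<le> n" for n using cond[of n] m that by linarith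
  have closed_iff: "(\<forall>x\<in>(+) m ` P. Dset S x \<inter> {m..} \<subseteq> (+) m ` P) \<longleftrightarrow> down_closed S P"
  proof
    assume cl: "\<forall>x\<in>(+) m ` P. Dset S x \<inter> {m..} \<subseteq> (+) m ` P"
    show "down_closed S P"
      unfolding down_closed_def
    proof (intro ballI impI)
      fix p s assume "p \<in> P" "s \<in> S" "s \<le> p"
      then have "m + (p - s) \<in> Dset S (m + p) \<inter> {m..}"
        using mem[of "m + (p - s)"] unfolding Dset_def by simp
      then show "p - s \<in> P" using cl \<open>p \<in> P\<close> by fastforce
    qed
  next
    assume "down_closed S P"
    show "\<forall>x\<in>(+) m ` P. Dset S x \<inter> {m..} \<subseteq> (+) m ` P"
    proof (intro ballI subsetI)
      fix x \<alpha> assume "x \<in> (+) m ` P" and \<alpha>: "\<alpha> \<in> Dset S x \<inter> {m..}"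
      then obtain p where p: "p \<in> P" "x = m + p" by blast
      have "m \<le> \<alpha>" "\<alpha> \<le> x" "x - \<alpha> \<in> S" using \<alpha> unfolding Dset_def by auto
      moreover have "x - \<alpha> \<le> p" using p \<open>m \<le> \<alpha>\<close> by simp
      ultimately have "p - (x - \<alpha>) \<in> P"
        using \<open>down_closed S P\<close> p(1) unfolding down_closed_def by blast
      moreover have "\<alpha> = m + (p - (x - \<alpha>))" using p \<open>m \<le> \<alpha>\<close> \<open>\<alpha> \<le> x\<close> by simp
      ultimately show "\<alpha> \<in> (+) m ` P" by blast
    qed
  qed
  have "finite ((+) m ` P) \<longleftrightarrow> finite P" by (simp add: finite_image_iff)
  moreover have "card ((+) m ` P) = card P" by (simp add: card_image)
  moreover have "m \<in> (+) m ` P \<longleftrightarrow> 0 \<in> P" by force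
  moreover have "(+) m ` P \<subseteq> S" using mem by auto
  ultimately show ?thesis
    using closed_iff m unfolding amenable_def by auto
qed

lemma amenable_eq_image_shift:
  assumes "amenable S m r M"
  shows "M = (+) m ` {p. m + p \<in> M}"
proof (intro equalityI subsetI)
  fix x assume "x \<in> M"
  then have "x = m + (x - m)" "m + (x - m) \<in> M" using assms unfolding amenable_def by auto
  then show "x \<in> (+) m ` {p. m + p \<in> M}" by blast
qed auto

lemma DsetA_shift_eq:
  assumes S0: "0 \<in> S" and cond: "\<And>n. conductor S \<le> n \<Longrightarrow> n \<in> S"
    and am: "amenable S m r ((+) m ` P)"
  shows "DsetA S ((+) m ` P)
    = (+) m ` P \<union> ({\<beta>\<in>S. \<beta> < m} - (\<lambda>u. m - Suc u) ` missing_shifts S P)"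
    (is "DsetA S ?M = ?M \<union> (?U - ?Out)")
proof -
  have m: "int (2 * conductor S) - 1 \<le> int m" and cl: "\<forall>x\<in>?M. Dset S x \<inter> {m..} \<subseteq> ?M"
    and P0: "0 \<in> P"
    using am amenable_shift_iff[OF cond] unfolding amenable_def by blast+
  have Suc_u: "Suc u \<le> m" if "u \<in> missing_shifts S P" for u
    using Suc_less_conductor_if_missing_shift[OF cond P0 that] m by linarith
  show ?thesis
  proof (intro equalityI subsetI)
    fix \<alpha> assume "\<alpha> \<in> DsetA S ?M"
    then obtain p where p: "p \<in> P" "\<alpha> \<in> S" "\<alpha> \<le> m + p" "m + p - \<alpha> \<in> S"
      unfolding DsetA_def Dset_def by blast
    show "\<alpha> \<in> ?M \<union> (?U - ?Out)"
    proof (cases "m \<le> \<alpha>")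
      case True
      then have "\<alpha> \<in> Dset S (m + p) \<inter> {m..}" using p unfolding Dset_def by simp
      then show ?thesis using cl p(1) by blast
    next
      case False
      have "\<alpha> \<notin> ?Out"
      proof
        assume "\<alpha> \<in> ?Out"
        then obtain u where u: "u \<in> missing_shifts S P" "\<alpha> = m - Suc u" by blast
        have "m + p - \<alpha> = p + u + 1" using u Suc_u by simp
        then show False using u(1) p unfolding missing_shifts_def by auto
      qed
      then show ?thesis using False p(2) by simp
    qed
  next
    fix \<alpha> assume \<alpha>: "\<alpha> \<in> ?M \<union> (?U - ?Out)"
    show "\<alpha> \<in> DsetA S ?M"
    proof (cases "\<alpha> \<in> ?M")
      case True
      then have "\<alpha> \<in> Dset S \<alpha>" using S0 am unfolding Dset_def amenable_def by auto
      then show ?thesis using True unfolding DsetA_def by blast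
    next
      case False
      then have \<alpha>U: "\<alpha> \<in> S" "\<alpha> < m" "\<alpha> \<notin> ?Out" using \<alpha> by auto
      show ?thesis
      proof (rule ccontr)
        assume not_D: "\<alpha> \<notin> DsetA S ?M"
        have "m - Suc \<alpha> \<in> missing_shifts S P"
          unfolding missing_shifts_def
        proof (intro CollectI ballI notI)
          fix p assume "p \<in> P" and "p + (m - Suc \<alpha>) + 1 \<in> S"
          moreover have "m + p - \<alpha> = p + (m - Suc \<alpha>) + 1" using \<alpha>U by simp
          ultimately have "\<alpha> \<in> Dset S (m + p)" using \<alpha>U unfolding Dset_def by simp
          then show False using not_D \<open>p \<in> P\<close> unfolding DsetA_def by blast
        qed
        moreover have "\<alpha> = m - Suc (m - Suc \<alpha>)" using \<alpha>U by simp
        ultimately show False using \<alpha>U by blast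
      qed
    qed
  qed
qed

lemma card_DsetA_shift:
  assumes S0: "0 \<in> S" and cond: "\<And>n. conductor S \<le> n \<Longrightarrow> n \<in> S"
    and am: "amenable S m r ((+) m ` P)"
  shows "card (DsetA S ((+) m ` P)) + card (missing_shifts S P) = r + card {\<beta>\<in>S. \<beta> < m}"
proof -
  let ?M = "(+) m ` P" and ?U = "{\<beta>\<in>S. \<beta> < m}"
  let ?Out = "(\<lambda>u. m - Suc u) ` missing_shifts S P"
  have m: "int (2 * conductor S) - 1 \<le> int m" and fin: "finite P" "card P = r" and P0: "0 \<in> P"
    using am amenable_shift_iff[OF cond] unfolding amenable_def by blast+
  \<comment> \<open>since m \<ge> 2c - 1, each m - 1 - u with u + 1 < c is still at least c\<close>
  have Suc_u: "Suc u \<le> m" "conductor S \<le> m - Suc u" if "u \<in> missing_shifts S P" for u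
    using Suc_less_conductor_if_missing_shift[OF cond P0 that] m by linarith+
  have "?Out \<subseteq> ?U" using Suc_u cond by fastforce
  moreover have "card ?Out = card (missing_shifts S P)"
    by (rule card_image) (auto intro!: inj_onI dest!: Suc_u(1))
  moreover have "card ?M = r" using fin by (simp add: card_image)
  moreover have "?M \<inter> (?U - ?Out) = {}" by auto
  ultimately show ?thesis
    using DsetA_shift_eq[OF S0 cond am] fin card_mono[of ?U ?Out]
    by (simp add: card_Un_disjoint card_Diff_subset finite_subset)
qed

lemma shadow_shift_initial_segment:
  assumes "0 < q" and "P \<inter> {..<a+b} = {..<q}"
  shows "shadow a b m ((+) m ` P) = {m..m+q-1}"
proof -
  have "shadow a b m ((+) m ` P) = (+) m ` (P \<inter> {..<a+b})" unfolding shadow_def by auto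
  also have "\<dots> = (+) m ` {0..<q}" using assms(2) by (simp add: atLeast0LessThan)
  also have "\<dots> = {m..m+q-1}" using assms(1) by auto
  finally show ?thesis .
qed

section \<open>Staircases\<close>

locale interval_generators =
  fixes a b :: nat
  assumes a_pos: "0 < a" and b_pos: "0 < b"
begin

abbreviation S :: "nat set" where
  "S \<equiv> interval_semigroup a b"

lemma mem_if_square_le:
  assumes "a*a \<le> n"
  shows "n \<in> S"
proof -
  have "n mod a < a" using a_pos by simp
  also have "a \<le> n div a" using div_le_mono[OF assms, of a] a_pos by simp
  also have "n div a \<le> n div a * b" using b_pos by simp
  finally have "n mod a \<le> n div a * b" by simp
  moreover have "n = n div a * a + n mod a" "n div a * (a+b) = n div a * a + n div a * b"
    by (simp_all add: add_mult_distrib2)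
  ultimately show ?thesis unfolding mem_interval_semigroup_iff
    by (intro exI[of _ "n div a"]) linarith
qed

lemma mem_if_conductor_le: "conductor S \<le> n \<Longrightarrow> n \<in> S"
  using LeastI_ex[of "\<lambda>c. \<forall>n\<ge>c. n \<in> S"] mem_if_square_le unfolding conductor_def by blast

definition staircase :: "nat \<Rightarrow> nat set" where
  "staircase q = {t*a + w | t w. t*b \<le> w \<and> w < q}"

lemma finite_staircase: "finite (staircase q)"
proof (rule finite_subset)
  show "staircase q \<subseteq> {..<q*a + q}"
  proof
    fix n assume "n \<in> staircase q"
    then obtain t w where n: "n = t*a + w" "t*b \<le> w" "w < q" unfolding staircase_def by blast
    have "t \<le> t*b" using b_pos by simp
    then have "t \<le> q" using n by linarith
    then have "t*a \<le> q*a" by (rule mult_le_mono1)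
    then show "n \<in> {..<q*a + q}" unfolding lessThan_iff using n by linarith
  qed
qed simp

lemma staircase_mono: "q \<le> q' \<Longrightarrow> staircase q \<subseteq> staircase q'"
  unfolding staircase_def by fastforce

lemma down_closed_staircase: "down_closed S (staircase q)"
  unfolding down_closed_def
proof (intro ballI impI)
  fix p s assume "p \<in> staircase q" and s: "s \<in> S" "s \<le> p"
  then obtain t w where p: "p = t*a + w" "t*b \<le> w" "w < q" unfolding staircase_def by blast
  obtain t' where t': "t'*a \<le> s" "s \<le> t'*a + t'*b"
    using s(1) unfolding mem_interval_semigroup_iff by (auto simp: add_mult_distrib2)
  show "p - s \<in> staircase q"
  proof (cases "t' \<le> t")
    case True
    have "t*a = (t - t')*a + t'*a" "t*b = (t - t')*b + t'*b"
      using True by (simp_all add: le_add_diff_inverse2 flip: add_mult_distrib)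
    then have "p - s = (t - t')*a + (w - (s - t'*a)) \<and> (t - t')*b \<le> w - (s - t'*a)
        \<and> w - (s - t'*a) < q"
      using p t' s(2) by linarith
    then show ?thesis unfolding staircase_def by blast
  next
    case False
    then have "t*a \<le> t'*a" by (intro mult_le_mono1) simp
    then have "p - s = 0*a + (p - s) \<and> 0*b \<le> p - s \<and> p - s < q" using p t' by linarith
    then show ?thesis unfolding staircase_def by blast
  qed
qed

lemma lessThan_subset_staircase: "{..<q} \<subseteq> staircase q"
proof
  fix n assume "n \<in> {..<q}"
  then have "n = 0*a + n \<and> 0*b \<le> n \<and> n < q" by simp
  then show "n \<in> staircase q" unfolding staircase_def by blast
qed

lemma staircase_Int_lessThan: "q \<le> a + b \<Longrightarrow> staircase q \<inter> {..<a+b} = {..<q}"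
proof (intro equalityI subsetI)
  fix n assume "q \<le> a + b" and "n \<in> staircase q \<inter> {..<a+b}"
  then obtain t w where n: "n = t*a + w" "t*b \<le> w" "w < q" "n < a + b"
    unfolding staircase_def by blast
  then show "n \<in> {..<q}" by (cases t) auto
qed (use lessThan_subset_staircase in auto)

lemma staircase_Int_lessThan_Int_lessThan:
  assumes "q \<le> a + b" and "q \<le> y"
  shows "staircase q \<inter> {..<y} \<inter> {..<a+b} = {..<q}"
proof (intro equalityI subsetI)
  fix x assume "x \<in> staircase q \<inter> {..<y} \<inter> {..<a+b}"
  then have "x \<in> staircase q \<inter> {..<a+b}" by blast
  then show "x \<in> {..<q}" using staircase_Int_lessThan[OF assms(1)] by blast
qed (use lessThan_subset_staircase assms in auto)

lemma staircase_block:
  assumes "q \<le> a + b"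
  shows "{t*(a+b)..<t*(a+b) + (q - t*b)} \<subseteq> staircase q \<inter> {t*(a+b)..<Suc t*(a+b)}"
proof
  fix n assume n: "n \<in> {t*(a+b)..<t*(a+b) + (q - t*b)}"
  have "t*(a+b) = t*a + t*b" by (simp add: add_mult_distrib2)
  then have "n = t*a + (n - t*a) \<and> t*b \<le> n - t*a \<and> n - t*a < q" using n by auto
  then have "n \<in> staircase q" unfolding staircase_def by blast
  then show "n \<in> staircase q \<inter> {t*(a+b)..<Suc t*(a+b)}" using n assms by auto
qed

lemma card_block_le:
  assumes closed: "down_closed S P" and small: "card (P \<inter> {..<a+b}) < a+b"
  shows "card (P \<inter> {t*(a+b)..<Suc t*(a+b)}) \<le> card (P \<inter> {..<a+b}) - t*b"
proof -
  define E where "E = {e. e < a+b \<and> t*(a+b) + e \<in> P}"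
  have "P \<inter> {t*(a+b)..<Suc t*(a+b)} = (+) (t*(a+b)) ` E"
  proof (intro equalityI subsetI)
    fix n assume "n \<in> P \<inter> {t*(a+b)..<Suc t*(a+b)}"
    then have "n - t*(a+b) \<in> E" "n = t*(a+b) + (n - t*(a+b))" unfolding E_def by auto
    then show "n \<in> (+) (t*(a+b)) ` E" by blast
  qed (auto simp: E_def)
  then have card_block: "card (P \<inter> {t*(a+b)..<Suc t*(a+b)}) = card E"
    by (simp add: card_image)
  \<comment> \<open>from a point of P in block t one can subtract any element of level t or t + 1 of S\<close>
  have mem: "x \<in> P \<inter> {..<a+b}"
    if "e \<in> E" "x < a+b" "k*a \<le> t*(a+b) + e - x" "t*(a+b) + e - x \<le> k*(a+b)" "x \<le> t*(a+b) + e"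
    for e x k
  proof -
    have "t*(a+b) + e - x \<in> S" unfolding mem_interval_semigroup_iff using that(3,4) by blast
    then have "t*(a+b) + e - (t*(a+b) + e - x) \<in> P"
      using closed that(1) unfolding down_closed_def E_def by auto
    then show ?thesis using that(2,5) by simp
  qed
  have split: "t*(a+b) = t*a + t*b" "Suc t*(a+b) = t*a + t*b + (a+b)"
    by (simp_all add: add_mult_distrib2)
  show ?thesis
  proof (cases "E = {}")
    case False
    have "card E + t*b \<le> card (P \<inter> {..<a+b})"
    proof (rule card_add_width_le_wrapped[of _ "a+b" a])
      show "P \<inter> {..<a+b} \<subset> {..<a+b}"
        using small by (metis card_lessThan inf_le2 less_irrefl psubsetI)
      show "E \<subseteq> {..<a+b}" unfolding E_def by auto
    next
      fix e x assume "e \<in> E" "e \<le> x" "x \<le> e + t*b" "x < a+b"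
      then show "x \<in> P \<inter> {..<a+b}" using split by (intro mem[of e x t]) auto
    next
      fix e x assume "e \<in> E" "x + a \<le> e + t*b" "x < a+b"
      moreover have "e < a+b" using \<open>e \<in> E\<close> unfolding E_def by simp
      ultimately show "x \<in> P \<inter> {..<a+b}" using split by (intro mem[of e x "Suc t"]) auto
    qed (use False in auto)
    then show ?thesis using card_block by simp
  qed (use card_block in simp)
qed

lemma card_le_card_staircase:
  assumes "finite P" and "down_closed S P" and small: "card (P \<inter> {..<a+b}) < a+b"
  shows "card P \<le> card (staircase (card (P \<inter> {..<a+b})))"
proof -
  define q where "q = card (P \<inter> {..<a+b})"
  let ?block = "\<lambda>t. {t*(a+b)..<Suc t*(a+b)}"
  obtain B where "P \<subseteq> {..<B}" using assms(1) by (auto simp: finite_nat_set_iff_bounded)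
  moreover have "{..<B} \<subseteq> {..<B*(a+b)}" using a_pos by simp
  ultimately have "P \<subseteq> {..<B*(a+b)}" by (rule order.trans)
  then have "card P = (\<Sum>t<B. card (P \<inter> ?block t))"
    using card_Int_lessThan_mult[of P B "a+b"] by (simp add: Int_absorb2)
  also have "\<dots> \<le> (\<Sum>t<B. card (staircase q \<inter> ?block t))"
  proof (rule sum_mono)
    fix t
    have "card (P \<inter> ?block t) \<le> card {t*(a+b)..<t*(a+b) + (q - t*b)}"
      using card_block_le[OF assms(2) small, of t] by (simp add: q_def)
    also have "\<dots> \<le> card (staircase q \<inter> ?block t)"
      using staircase_block[of q t] small finite_staircase unfolding q_def
      by (intro card_mono) auto
    finally show "card (P \<inter> ?block t) \<le> card (staircase q \<inter> ?block t)" .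
  qed
  also have "\<dots> = card (staircase q \<inter> {..<B*(a+b)})"
    by (rule card_Int_lessThan_mult[symmetric])
  also have "\<dots> \<le> card (staircase q)" by (intro card_mono) (auto simp: finite_staircase)
  finally show ?thesis unfolding q_def .
qed

lemma finite_missing_shifts:
  assumes "0 \<in> P"
  shows "finite (missing_shifts S P)"
proof (rule finite_subset)
  show "missing_shifts S P \<subseteq> {..<a*a}"
  proof
    fix u assume "u \<in> missing_shifts S P"
    then have "0 + u + 1 \<notin> S" using assms unfolding missing_shifts_def by blast
    then show "u \<in> {..<a*a}" using mem_if_square_le[of "u + 1"] by fastforce
  qed
qed simp

lemma card_missing_shifts_Int_lessThan:
  assumes P0: "0 \<in> P"
  shows "card (missing_shifts S P \<inter> {..<a+b}) \<le> a - card (P \<inter> {..<a+b})"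
proof (cases "missing_shifts S P \<inter> {..<a+b} = {}")
  case False
  define Y X where "Y = missing_shifts S P \<inter> {..<a+b}" and "X = P \<inter> {..<a+b}"
  have mem_S: "n \<in> S" if "a \<le> n" "n \<le> a+b" for n
    using that unfolding mem_interval_semigroup_iff by (intro exI[of _ 1]) simp
  have Y_less: "y + 1 < a" if "y \<in> Y" for y
    using that P0 mem_S[of "y + 1"] unfolding Y_def missing_shifts_def by force
  define y0 where "y0 = Min Y"
  have "finite Y" "Y \<noteq> {}" using False by (simp_all add: Y_def)
  then have y0: "y0 \<in> Y" "\<And>y. y \<in> Y \<Longrightarrow> y0 \<le> y" by (simp_all add: y0_def)
  \<comment> \<open>X avoids the reflection a - 1 - Y of Y and the b points above a - 1 - y0\<close>
  define Z1 Z2 where "Z1 = (\<lambda>y. a - 1 - y) ` Y" and "Z2 = {a - y0..<a + b - y0}"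
  have "card Z1 = card Y" unfolding Z1_def
    by (rule card_image) (auto simp: inj_on_def dest!: Y_less)
  moreover have "card Z2 = b" unfolding Z2_def using Y_less[OF y0(1)] by simp
  moreover have "Z1 \<inter> Z2 = {}" unfolding Z1_def Z2_def using y0(2) Y_less by fastforce
  moreover have "X \<inter> Z1 = {}"
  proof -
    have "a - 1 - y \<notin> P" if "y \<in> Y" for y
      using that mem_S[of "a - 1 - y + y + 1"] Y_less[OF that]
      unfolding Y_def missing_shifts_def by auto
    then show ?thesis unfolding X_def Z1_def by blast
  qed
  moreover have "X \<inter> Z2 = {}"
    using y0(1) Y_less[OF y0(1)] mem_S unfolding X_def Z2_def Y_def missing_shifts_def
    by fastforce
  moreover have "X \<union> (Z1 \<union> Z2) \<subseteq> {..<a+b}"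
    unfolding X_def Z1_def Z2_def using Y_less b_pos by auto
  ultimately have "card X + (card Y + b) \<le> a + b"
    using card_mono[of "{..<a+b}" "X \<union> (Z1 \<union> Z2)"] unfolding Y_def X_def Z1_def Z2_def
    by (simp add: card_Un_disjoint Int_Un_distrib)
  then show ?thesis unfolding X_def Y_def by simp
qed simp

lemma staircase_subset_missing_shifts:
  assumes "P \<subseteq> staircase q"
  shows "staircase (a - q) \<subseteq> missing_shifts S P"
proof
  fix u assume "u \<in> staircase (a - q)"
  then obtain k w where u: "u = k*a + w" "k*b \<le> w" "w < a - q" unfolding staircase_def by blast
  show "u \<in> missing_shifts S P" unfolding missing_shifts_def
  proof (intro CollectI ballI)
    fix p assume "p \<in> P"
    then obtain t w' where p: "p = t*a + w'" "t*b \<le> w'" "w' < q"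
      using assms unfolding staircase_def by blast
    have "p + u + 1 = (t+k)*a + (w + w' + 1)" "(t+k)*b < w + w' + 1" "w + w' + 1 < a"
      using u p by (simp_all add: add_mult_distrib)
    then show "p + u + 1 \<notin> S" using not_mem_interval_semigroup by metis
  qed
qed

lemma card_missing_shifts_le:
  assumes "0 \<in> P" and "0 \<in> P'" and "P' \<subseteq> staircase (card (P \<inter> {..<a+b}))"
  shows "card (missing_shifts S P) \<le> card (missing_shifts S P')"
proof -
  let ?Q = "missing_shifts S P" and ?q = "card (P \<inter> {..<a+b})"
  have small: "card (?Q \<inter> {..<a+b}) \<le> a - ?q"
    using card_missing_shifts_Int_lessThan[OF assms(1)] .
  have "down_closed S ?Q"
    by (rule down_closed_missing_shifts) (simp add: interval_semigroup_def gen_monoid_add)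
  then have "card ?Q \<le> card (staircase (card (?Q \<inter> {..<a+b})))"
    using card_le_card_staircase finite_missing_shifts[OF assms(1)] small b_pos by simp
  also have "\<dots> \<le> card (staircase (a - ?q))"
    using staircase_mono[OF small] finite_staircase by (rule card_mono[rotated])
  also have "\<dots> \<le> card (missing_shifts S P')"
    using staircase_subset_missing_shifts[OF assms(3)] finite_missing_shifts[OF assms(2)]
    by (rule card_mono[rotated])
  finally show ?thesis .
qed

lemma exists_initial_segment_improvement:
  assumes "finite P" and "0 \<in> P" and "down_closed S P"
  obtains P' q where "finite P'" "card P' = card P" "0 \<in> P'" "down_closed S P'"
    "0 < q" "P' \<inter> {..<a+b} = {..<q}" "card (missing_shifts S P) \<le> card (missing_shifts S P')"
proof -
  define q where "q = card (P \<inter> {..<a+b})"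
  have "0 < q" using assms(2) a_pos unfolding q_def by (auto simp: card_gt_0_iff)
  have "q \<le> a + b" unfolding q_def by (metis card_lessThan card_mono finite_lessThan inf_le2)
  show ?thesis
  proof (cases "q = a + b")
    case True
    then have "P \<inter> {..<a+b} = {..<a+b}" unfolding q_def by (intro card_subset_eq) auto
    then show ?thesis using that assms \<open>0 < q\<close> True by blast
  next
    case False
    then have "card P \<le> card (staircase q)"
      using card_le_card_staircase assms(1,3) \<open>q \<le> a + b\<close> unfolding q_def by simp
    then obtain y where y: "card (staircase q \<inter> {..<y}) = card P"
      using exists_card_Int_lessThan_eq finite_staircase by blast
    define P' where "P' = staircase q \<inter> {..<y}"
    have "q \<le> card P" unfolding q_def using assms(1) by (intro card_mono) auto
    have "q \<le> y"
    proof (rule ccontr)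
      assume "\<not> q \<le> y"
      then have "{..<y} \<subseteq> staircase q" using lessThan_subset_staircase[of q] by auto
      then have "card P = y" using y by (simp add: Int_absorb1)
      then show False using \<open>q \<le> card P\<close> \<open>\<not> q \<le> y\<close> by linarith
    qed
    have "P' \<inter> {..<a+b} = {..<q}"
      unfolding P'_def using staircase_Int_lessThan_Int_lessThan \<open>q \<le> a + b\<close> \<open>q \<le> y\<close> by blast
    then have "0 \<in> P'" using \<open>0 < q\<close> by blast
    then have "card (missing_shifts S P) \<le> card (missing_shifts S P')"
      by (rule card_missing_shifts_le[OF assms(2)]) (simp add: P'_def q_def)
    moreover have "finite P'" "card P' = card P" "down_closed S P'"
      using y down_closed_Int_lessThan[OF down_closed_staircase] by (simp_all add: P'_def finite_staircase)
    ultimately show ?thesis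
      using that \<open>0 < q\<close> \<open>0 \<in> P'\<close> \<open>P' \<inter> {..<a+b} = {..<q}\<close> by blast
  qed
qed

end

theorem lemma4p27:
  fixes a b m r :: nat and M :: "nat set"
  assumes "0 < b" and "b < a"
    and "int m \<ge> 2 * int (conductor (interval_semigroup a b)) - 1"
    and "amenable (interval_semigroup a b) m r M"
  shows "\<exists>T. amenable (interval_semigroup a b) m r T \<and>
             (\<exists>k. m \<le> k \<and> shadow a b m T = {m..k}) \<and>
             card (DsetA (interval_semigroup a b) T) \<le> card (DsetA (interval_semigroup a b) M)"
proof -
  interpret interval_generators a b using assms(1,2) by unfold_locales simp_all
  note cond = mem_if_conductor_le
  have S0: "0 \<in> S" by (simp add: interval_semigroup_def gen_monoid.zero)
  have m: "int (2 * conductor S) - 1 \<le> int m"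
    using assms(3) by (simp only: of_nat_mult of_nat_numeral)
  define P where "P = {p. m + p \<in> M}"
  have "M = (+) m ` P" unfolding P_def using assms(4) by (rule amenable_eq_image_shift)
  then have am_M: "amenable S m r ((+) m ` P)" using assms(4) by simp
  then have "finite P" "card P = r" "0 \<in> P" "down_closed S P"
    using amenable_shift_iff[OF cond m] by simp_all
  then obtain P' q where P': "finite P'" "card P' = r" "0 \<in> P'" "down_closed S P'"
    and "0 < q" "P' \<inter> {..<a+b} = {..<q}"
    and missing: "card (missing_shifts S P) \<le> card (missing_shifts S P')"
    by (metis exists_initial_segment_improvement)
  have am_T: "amenable S m r ((+) m ` P')" using P' amenable_shift_iff[OF cond m] by simp
  have "shadow a b m ((+) m ` P') = {m..m+q-1}"
    using shadow_shift_initial_segment \<open>0 < q\<close> \<open>P' \<inter> {..<a+b} = {..<q}\<close> by blast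
  moreover have "card (DsetA S ((+) m ` P')) + card (missing_shifts S P') = r + card {\<beta>\<in>S. \<beta> < m}"
    by (rule card_DsetA_shift[OF S0 cond am_T])
  moreover have "card (DsetA S M) + card (missing_shifts S P) = r + card {\<beta>\<in>S. \<beta> < m}"
    unfolding \<open>M = _\<close> by (rule card_DsetA_shift[OF S0 cond am_M])
  ultimately show ?thesis
    using am_T missing \<open>0 < q\<close> by (intro exI[of _ "(+) m ` P'"] conjI exI[of _ "m+q-1"]) auto
qed

end
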